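(* In any execution of Algorithm 1, no two correct processes mbrb-deliver different app-messages from a process $p_i$ with the same sequence number $sn$; i.e., if correct processes mbrb-deliver $(m,sn,i)$ and $(m',sn,i)$ respectively, then $m=m'$.
   Context: System model. There are $n$ asynchronous processes $p_1,\dots,p_n$ with distinct known identities. Up to $t$ are Byzantine (arbitrary behavior); the rest are correct; $c$ is the number of correct processes. The network is fully connected, asynchronous, never corrupts/duplicates/creates messages; "broadcast $M$" sends $M$ to all $n$ processes; a message adversary may suppress, per broadcast by a correct process, up to $d<c$ copies addressed to correct processes. Signatures are unforgeable (only $p_k$ can produce a valid signature by $p_k$) and public keys are known. It is assumed $n>3t+2d$. Algorithm 1 (code for $p_i$). Each process stores, for each triplet $(m,sn,j)$, a set of saved valid signatures of that triplet, at most one per signer. On $\mathrm{mbrb\_broadcast}(m,sn)$: $p_i$ saves its own signature of $(m,sn,i)$ and broadcasts $\mathrm{BUNDLE}(m,sn,i,S)$, $S$ the saved signatures for $(m,sn,i)$. On receiving $\mathrm{BUNDLE}(m,sn,j,sigs)$: if $p_i$ has not already mbrb-delivered some $(-,sn,j)$ and $sigs$ contains a valid signature of $(m,sn,j)$ by $p_j$, then: (1) save all new valid signatures of $(m,sn,j)$ in $sigs$; (2) if $p_i$ has not yet signed any $(-,sn,j)$, save its own signature of $(m,sn,j)$ and broadcast $\mathrm{BUNDLE}(m,sn,j,\text{all saved signatures for }(m,sn,j))$; (3) if strictly more than $\frac{n+t}{2}$ signatures for $(m,sn,j)$ are saved, broadcast $\mathrm{BUNDLE}(m,sn,j,\text{all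 saved signatures})$ and mbrb-deliver $(m,sn,j)$. A correct process never uses the same sequence number twice in mbrb-broadcast. *)

theory Defs
  imports Main "HOL-Library.Multiset"
begin

text \<open>Executions of Algorithm 1 (signature-based MBRB) as a global transition system.
Processes are the identities 1..n; B is the set of Byzantine processes.
A triplet (m, sn, j) is an app-message m with sequence number sn from p_j.
A signature is modelled symbolically: Sig k x is the signature of triplet x by p_k.
Unforgeability: a Byzantine process can only put into its messages signatures by
Byzantine signers (or by non-existent identities, which are invalid anyway) or
signatures that some Byzantine process has previously received.\<close>

type_synonym 'm triplet = "'m \<times> nat \<times> nat"

datatype 'm sig = Sig nat "'m triplet"

datatype 'm msg = BUNDLE 'm nat nat "'m sig set"

fun sigs_of :: "'m msg \<Rightarrow> 'm sig set" where
  "sigs_of (BUNDLE m sn j S) = S"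

definition valid_sig :: "nat \<Rightarrow> 'm sig \<Rightarrow> 'm triplet \<Rightarrow> bool" where
  "valid_sig n \<sigma> x \<longleftrightarrow> (\<exists>k\<in>{1..n}. \<sigma> = Sig k x)"

text \<open>Global state. The local fields are only meaningful for correct processes.
  net is the multiset of in-transit copies (sender, destination, message).\<close>
record 'm st =
  signed    :: "nat \<Rightarrow> 'm triplet set"
  saved     :: "nat \<Rightarrow> 'm triplet \<Rightarrow> 'm sig set"
  delivered :: "nat \<Rightarrow> 'm triplet set"
  used_sn   :: "nat \<Rightarrow> nat set"
  net       :: "(nat \<times> nat \<times> 'm msg) multiset"
  byz_known :: "'m sig set"

definition init_st :: "'m st" where
  "init_st = \<lparr> signed = (\<lambda>_. {}), saved = (\<lambda>_ _. {}), delivered = (\<lambda>_. {}),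
              used_sn = (\<lambda>_. {}), net = {#}, byz_known = {} \<rparr>"

text \<open>Broadcast of M by p_i: one copy to every process, except the copies addressed to
  the set D of correct processes suppressed by the message adversary.\<close>
definition bcast :: "nat \<Rightarrow> nat set \<Rightarrow> nat \<Rightarrow> 'm msg \<Rightarrow> (nat \<times> nat \<times> 'm msg) multiset" where
  "bcast n D i M = mset_set ((\<lambda>k. (i, k, M)) ` ({1..n} - D))"

definition adv_ok :: "nat \<Rightarrow> nat set \<Rightarrow> nat \<Rightarrow> nat set \<Rightarrow> bool" where
  "adv_ok n B d D \<longleftrightarrow> D \<subseteq> {1..n} - B \<and> card D \<le> d"

inductive step :: "nat \<Rightarrow> nat \<Rightarrow> nat \<Rightarrow> nat set \<Rightarrow> 'm st \<Rightarrow> 'm st \<Rightarrow> bool"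
  for n t d :: nat and B :: "nat set" where
  mbrb_broadcast:
  "\<lbrakk> i \<in> {1..n} - B; sn \<notin> used_sn s i; adv_ok n B d D;
     S = insert (Sig i (m, sn, i)) (saved s i (m, sn, i));
     s' = s\<lparr> used_sn := (used_sn s)(i := insert sn (used_sn s i)),
             signed := (signed s)(i := insert (m, sn, i) (signed s i)),
             saved := (saved s)(i := (saved s i)((m, sn, i) := S)),
             net := net s + bcast n D i (BUNDLE m sn i S) \<rparr> \<rbrakk>
   \<Longrightarrow> step n t d B s s'"
| recv_ignore:
  "\<lbrakk> i \<in> {1..n} - B; (p, i, BUNDLE m sn j sigs) \<in># net s;
     (\<exists>m'. (m', sn, j) \<in> delivered s i) \<or> \<not> (j \<in> {1..n} \<and> Sig j (m, sn, j) \<in> sigs);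
     s' = s\<lparr> net := net s - {#(p, i, BUNDLE m sn j sigs)#} \<rparr> \<rbrakk>
   \<Longrightarrow> step n t d B s s'"
| recv_accept:
  "\<lbrakk> i \<in> {1..n} - B; (p, i, BUNDLE m sn j sigs) \<in># net s;
     \<not> (\<exists>m'. (m', sn, j) \<in> delivered s i); j \<in> {1..n}; Sig j (m, sn, j) \<in> sigs;
     adv_ok n B d D1; adv_ok n B d D2;
     x = (m, sn, j);
     S1 = saved s i x \<union> {\<sigma> \<in> sigs. valid_sig n \<sigma> x};
     sign = (\<not> (\<exists>m'. (m', sn, j) \<in> signed s i));
     S2 = (if sign then insert (Sig i x) S1 else S1);
     dlv = (2 * card S2 > n + t);
     s' = s\<lparr> signed := (signed s)(i := (if sign then insert x (signed s i) else signed s i)),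
             saved := (saved s)(i := (saved s i)(x := S2)),
             delivered := (delivered s)(i := (if dlv then insert x (delivered s i) else delivered s i)),
             net := net s - {#(p, i, BUNDLE m sn j sigs)#}
                    + (if sign then bcast n D1 i (BUNDLE m sn j S2) else {#})
                    + (if dlv then bcast n D2 i (BUNDLE m sn j S2) else {#}) \<rparr> \<rbrakk>
   \<Longrightarrow> step n t d B s s'"
| byz_send:
  "\<lbrakk> b \<in> B; k \<in> {1..n};
     \<forall>\<sigma>\<in>sigs_of M. \<forall>q x. \<sigma> = Sig q x \<longrightarrow> q \<in> B \<or> q \<notin> {1..n} \<or> \<sigma> \<in> byz_known s;
     s' = s\<lparr> net := net s + {#(b, k, M)#} \<rparr> \<rbrakk>
   \<Longrightarrow> step n t d B s s'"
| byz_recv: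
  "\<lbrakk> b \<in> B; (p, b, M) \<in># net s;
     s' = s\<lparr> net := net s - {#(p, b, M)#}, byz_known := byz_known s \<union> sigs_of M \<rparr> \<rbrakk>
   \<Longrightarrow> step n t d B s s'"

inductive reach :: "nat \<Rightarrow> nat \<Rightarrow> nat \<Rightarrow> nat set \<Rightarrow> 'm st \<Rightarrow> bool"
  for n t d :: nat and B :: "nat set" where
  reach_init: "reach n t d B init_st"
| reach_step: "reach n t d B s \<Longrightarrow> step n t d B s s' \<Longrightarrow> reach n t d B s'"

end

theory Submission
  imports Defs
begin

text \<open>A correct process delivers a triplet only once it holds more than (n + t)/2 valid
  signatures of it.  Two such signature sets of triplets with the same sequence number and sender
  are drawn from the n identities, so their signers overlap in more than t processes, hence in a
  correct one.  Signatures of correct processes cannot be forged, so this common signer signed both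
  triplets; but a correct process signs at most one message per sequence number and sender.\<close>

lemma quorums_share_outsider:
  assumes "finite U" and "K1 \<subseteq> U" and "K2 \<subseteq> U" and "finite B" and "card B \<le> t"
    and "card U + t < 2 * card K1" and "card U + t < 2 * card K2"
  obtains q where "q \<in> K1" and "q \<in> K2" and "q \<notin> B"
proof -
  have fin: "finite K1" "finite K2"
    using assms(1-3) finite_subset by auto
  have "card (K1 \<union> K2) \<le> card U"
    using assms(1-3) by (simp add: card_mono)
  then have "card K1 + card K2 \<le> card U + card (K1 \<inter> K2)"
    using card_Un_Int[OF fin] by linarith
  then have "card B < card (K1 \<inter> K2)"
    using assms(5-7) by linarith
  then have "\<not> K1 \<inter> K2 \<subseteq> B"
    using assms(4) card_mono by (metis not_le)
  then show thesis
    using that by blast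
qed

lemma card_signers:
  assumes "S \<subseteq> (\<lambda>q. Sig q x) ` A"
  shows "card {q \<in> A. Sig q x \<in> S} = card S"
proof -
  have "S = (\<lambda>q. Sig q x) ` {q \<in> A. Sig q x \<in> S}"
    using assms by blast
  moreover have "inj (\<lambda>q. Sig q x)"
    by (simp add: inj_def)
  ultimately show ?thesis
    by (metis card_image inj_on_subset subset_UNIV)
qed

lemma set_mset_bcast: "set_mset (bcast n D i M) = (\<lambda>k. (i, k, M)) ` ({1..n} - D)"
  unfolding bcast_def by simp

definition circulating :: "'m st \<Rightarrow> 'm sig set" where
  "circulating s = {\<sigma>. (\<exists>k x. \<sigma> \<in> saved s k x) \<or>
     (\<exists>p k M. (p, k, M) \<in># net s \<and> \<sigma> \<in> sigs_of M) \<or> \<sigma> \<in> byz_known s}"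

definition genuine_sigs :: "nat \<Rightarrow> nat set \<Rightarrow> 'm st \<Rightarrow> bool" where
  "genuine_sigs n B s \<longleftrightarrow>
     (\<forall>q x. q \<in> {1..n} - B \<longrightarrow> Sig q x \<in> circulating s \<longrightarrow> x \<in> signed s q)"

lemma genuine_sigs_extend:
  assumes "genuine_sigs n B s"
    and "\<And>q. signed s q \<subseteq> signed s' q"
    and "\<And>q x. q \<in> {1..n} - B \<Longrightarrow> Sig q x \<in> circulating s' \<Longrightarrow>
           Sig q x \<in> circulating s \<or> x \<in> signed s' q"
  shows "genuine_sigs n B s'"
  using assms unfolding genuine_sigs_def by blast

lemma genuine_sigs_step:
  assumes "step n t d B s s'" and "genuine_sigs n B s"
  shows "genuine_sigs n B s'"
  using assms
proof (induction rule: step.induct)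
  case (mbrb_broadcast i sn s D S m s')
  have "circulating s' \<subseteq> insert (Sig i (m, sn, i)) (circulating s)"
    using mbrb_broadcast(4,5) by (auto simp: circulating_def set_mset_bcast split: if_splits)
  with mbrb_broadcast show ?case
    by (intro genuine_sigs_extend[OF mbrb_broadcast(6)]) auto
next
  case (recv_ignore i p m sn j sigs s s')
  have "circulating s' \<subseteq> circulating s"
    using recv_ignore(4) by (auto simp: circulating_def) (meson in_diffD)
  with recv_ignore show ?case
    by (intro genuine_sigs_extend[OF recv_ignore(5)]) auto
next
  case (recv_accept i p m sn j sigs s D1 D2 x S1 sign S2 dlv s')
  have "circulating s' \<subseteq> circulating s \<union> S2"
    using recv_accept(13)
    by (auto simp: circulating_def set_mset_bcast split: if_splits) (meson in_diffD)+
  moreover have "S1 \<subseteq> circulating s"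
    using recv_accept(2,8,9) by (force simp: circulating_def)
  ultimately have "circulating s' \<subseteq> circulating s \<union> (if sign then {Sig i x} else {})"
    using recv_accept(11) by (cases sign) auto
  with recv_accept show ?case
    by (intro genuine_sigs_extend[OF recv_accept(14)]) (auto split: if_splits)
next
  case (byz_send b k M s s')
  have "\<And>q x. q \<in> {1..n} - B \<Longrightarrow> Sig q x \<in> circulating s' \<Longrightarrow> Sig q x \<in> circulating s"
    using byz_send(3,4) by (auto simp: circulating_def)
  with byz_send show ?case
    by (intro genuine_sigs_extend[OF byz_send(5)]) auto
next
  case (byz_recv b p M s s')
  have "circulating s' \<subseteq> circulating s"
    using byz_recv(2,3) by (auto simp: circulating_def) (meson in_diffD)
  with byz_recv show ?case
    by (intro genuine_sigs_extend[OF byz_recv(4)]) auto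
qed

definition saved_valid :: "nat \<Rightarrow> 'm st \<Rightarrow> bool" where
  "saved_valid n s \<longleftrightarrow> (\<forall>k x. saved s k x \<subseteq> (\<lambda>q. Sig q x) ` {1..n})"

lemma saved_valid_finite: "saved_valid n s \<Longrightarrow> finite (saved s k x)"
  unfolding saved_valid_def by (meson finite_atLeastAtMost finite_imageI finite_subset)

lemma saved_valid_step:
  assumes "step n t d B s s'" and "saved_valid n s"
  shows "saved_valid n s'"
  using assms by (induction rule: step.induct) (auto simp: saved_valid_def valid_sig_def)

definition own_signed_used :: "'m st \<Rightarrow> bool" where
  "own_signed_used s \<longleftrightarrow> (\<forall>k m sn. (m, sn, k) \<in> signed s k \<longrightarrow> sn \<in> used_sn s k)"

lemma own_signed_used_step:
  assumes "step n t d B s s'" and "genuine_sigs n B s" and "own_signed_used s"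
  shows "own_signed_used s'"
  using assms
proof (induction rule: step.induct)
  case (recv_accept i p m sn j sigs s D1 D2 x S1 sign S2 dlv s')
  \<comment> \<open>a correct sender's own signature in transit shows it has already signed x\<close>
  have "Sig j x \<in> circulating s"
    using recv_accept(2,5,8) unfolding circulating_def by force
  with recv_accept(1,14) have "j = i \<Longrightarrow> \<not> sign"
    using recv_accept(8,10) unfolding genuine_sigs_def by blast
  then show ?case
    using recv_accept(8,13,15) by (auto simp: own_signed_used_def)
qed (auto simp: own_signed_used_def)

definition signs_once :: "'m st \<Rightarrow> bool" where
  "signs_once s \<longleftrightarrow>
     (\<forall>k m m' sn j. (m, sn, j) \<in> signed s k \<longrightarrow> (m', sn, j) \<in> signed s k \<longrightarrow> m = m')"

lemma signs_once_step:
  assumes "step n t d B s s'" and "own_signed_used s" and "signs_once s"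
  shows "signs_once s'"
  using assms
  by (induction rule: step.induct) (auto simp: signs_once_def own_signed_used_def)

definition delivered_quorum :: "nat \<Rightarrow> nat \<Rightarrow> 'm st \<Rightarrow> bool" where
  "delivered_quorum n t s \<longleftrightarrow> (\<forall>k x. x \<in> delivered s k \<longrightarrow> n + t < 2 * card (saved s k x))"

lemma delivered_quorum_extend:
  assumes "delivered_quorum n t s" and "saved_valid n s'"
    and "\<And>k x. saved s k x \<subseteq> saved s' k x"
    and "\<And>k x. x \<in> delivered s' k \<Longrightarrow> x \<in> delivered s k \<or> n + t < 2 * card (saved s' k x)"
  shows "delivered_quorum n t s'"
  unfolding delivered_quorum_def
proof (intro allI impI)
  fix k x assume "x \<in> delivered s' k"
  moreover have "card (saved s k x) \<le> card (saved s' k x)"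
    using assms(2,3) by (simp add: card_mono saved_valid_finite)
  ultimately show "n + t < 2 * card (saved s' k x)"
    using assms(1,4) unfolding delivered_quorum_def by fastforce
qed

lemma delivered_quorum_step:
  assumes "step n t d B s s'" and "saved_valid n s" and "delivered_quorum n t s"
  shows "delivered_quorum n t s'"
proof (rule delivered_quorum_extend[OF assms(3) saved_valid_step[OF assms(1,2)]])
  show "saved s k x \<subseteq> saved s' k x" for k x
    using assms(1) by (induction rule: step.induct) auto
  show "x \<in> delivered s k \<or> n + t < 2 * card (saved s' k x)" if "x \<in> delivered s' k" for k x
    using assms(1) that by (induction rule: step.induct) (auto split: if_splits)
qed

definition safety_invariant :: "nat \<Rightarrow> nat \<Rightarrow> nat set \<Rightarrow> 'm st \<Rightarrow> bool" where
  "safety_invariant n t B s \<longleftrightarrow>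
     saved_valid n s \<and> genuine_sigs n B s \<and> own_signed_used s \<and> signs_once s \<and>
     delivered_quorum n t s"

lemma reach_safety_invariant:
  assumes "reach n t d B s"
  shows "safety_invariant n t B s"
  using assms
proof (induction rule: reach.induct)
  case reach_init
  show ?case
    by (simp add: safety_invariant_def init_st_def saved_valid_def genuine_sigs_def
        circulating_def own_signed_used_def signs_once_def delivered_quorum_def)
next
  case (reach_step s s')
  then show ?case
    unfolding safety_invariant_def
    by (meson saved_valid_step genuine_sigs_step own_signed_used_step signs_once_step
        delivered_quorum_step)
qed

lemma delivered_signers_quorum:
  assumes "safety_invariant n t B s" and "x \<in> delivered s k"
  shows "n + t < 2 * card {q \<in> {1..n}. Sig q x \<in> saved s k x}"
proof -
  have "saved s k x \<subseteq> (\<lambda>q. Sig q x) ` {1..n}"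
    using assms(1) unfolding safety_invariant_def saved_valid_def by blast
  then have "card {q \<in> {1..n}. Sig q x \<in> saved s k x} = card (saved s k x)"
    by (rule card_signers)
  moreover have "n + t < 2 * card (saved s k x)"
    using assms unfolding safety_invariant_def delivered_quorum_def by blast
  ultimately show ?thesis
    by simp
qed

lemma saved_sig_signed:
  assumes "safety_invariant n t B s" and "q \<in> {1..n} - B" and "Sig q x \<in> saved s k y"
  shows "x \<in> signed s q"
  using assms unfolding safety_invariant_def genuine_sigs_def circulating_def by blast

theorem mainTheorem4:
  fixes n t d :: nat and B :: "nat set" and s :: "'m st"
    and i i1 i2 sn :: nat and m m' :: 'm
  assumes "B \<subseteq> {1..n}" and "card B \<le> t"
    and "n > 3 * t + 2 * d" and "d < n - card B"
    and "reach n t d B s"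
    and "i1 \<in> {1..n} - B" and "i2 \<in> {1..n} - B"
    and "(m, sn, i) \<in> delivered s i1" and "(m', sn, i) \<in> delivered s i2"
  shows "m = m'"
  \<comment> \<open>only the delivery threshold and card B \<le> t matter; the bounds on n and d are for liveness\<close>
proof -
  have inv: "safety_invariant n t B s"
    using assms(5) by (rule reach_safety_invariant)
  define K1 where "K1 = {q \<in> {1..n}. Sig q (m, sn, i) \<in> saved s i1 (m, sn, i)}"
  define K2 where "K2 = {q \<in> {1..n}. Sig q (m', sn, i) \<in> saved s i2 (m', sn, i)}"
  have "n + t < 2 * card K1" and "n + t < 2 * card K2"
    unfolding K1_def K2_def using delivered_signers_quorum[OF inv] assms(8,9) by blast+
  moreover have "finite B"
    using assms(1) finite_subset by blast
  moreover have "K1 \<subseteq> {1..n}" and "K2 \<subseteq> {1..n}"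
    by (auto simp: K1_def K2_def)
  ultimately obtain q where "q \<in> K1" and "q \<in> K2" and "q \<notin> B"
    using quorums_share_outsider[of "{1..n}" K1 K2 B t] assms(2) by auto
  then have "(m, sn, i) \<in> signed s q" and "(m', sn, i) \<in> signed s q"
    using saved_sig_signed[OF inv] unfolding K1_def K2_def by auto
  then show ?thesis
    using inv unfolding safety_invariant_def signs_once_def by blast
qed

end
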